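(* Let $\rho(x)=1/\sqrt{1-(x/2)^2}$ for $x\in(-2,2)$, and let $F\in C_c(\mathbb{R})$ with $F\ge0$ and $F(x)\le F(y)$ whenever $|x|>|y|$. Then there exist constants $C$ and $n_0$ such that for all $n\ge n_0$, $$\sup_{|\mu|<2}\int_{-2}^{2}F\bigl(n\rho(x)(x-\mu)\bigr)\rho(x)\,dx\le\frac Cn.$$ *)

theory Defs
  imports "HOL-Analysis.Analysis"
begin

definition rho :: "real \<Rightarrow> real" where
  "rho x = 1 / sqrt (1 - (x / 2)^2)"

definition Cc :: "(real \<Rightarrow> real) \<Rightarrow> bool" where
  "Cc F \<longleftrightarrow> continuous_on UNIV F \<and> compact (closure (support_on UNIV F))"

end

theory Submission
  imports Defs
begin

text \<open>Substituting \<open>x = 2 sin \<theta>\<close> turns \<open>\<rho>(x) dx\<close> into \<open>2 d\<theta>\<close>, and Jordan's inequality shows that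
  \<open>n \<rho>(x) \<bar>x - \<mu>\<bar> \<le> R\<close> confines \<open>\<theta>\<close> to a window of length \<open>\<pi>R/n\<close> around \<open>arcsin(\<mu>/2)\<close>.
  Since \<open>F\<close> is bounded and vanishes outside \<open>[-R, R]\<close>, the integral is at most \<open>2\<pi>RM/n\<close>.\<close>

lemma jordan_inequality:
  assumes "0 \<le> y" "y \<le> pi/2"
  shows "2 * y / pi \<le> sin y"
proof -
  have "concave_on {0..pi} sin"
    by (rule f''_le0_imp_concave[where f' = cos and f'' = "\<lambda>x. - sin x"])
       (auto intro!: derivative_eq_intros sin_ge_zero)
  moreover define t where "t = 2 * y / pi"
  moreover have "0 \<le> t" "t \<le> 1"
    using assms unfolding t_def by (auto simp: field_simps)
  ultimately have "(1 - t) * sin 0 + t * sin (pi/2) \<le> sin ((1 - t) *\<^sub>R 0 + t *\<^sub>R (pi/2))"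
    by (intro concave_onD) auto
  then show ?thesis
    unfolding t_def by simp
qed

lemma jordan_inequality_abs:
  assumes "\<bar>y\<bar> \<le> pi/2"
  shows "2 * \<bar>y\<bar> / pi \<le> \<bar>sin y\<bar>"
  using jordan_inequality[of y] jordan_inequality[of "-y"] assms by (cases "y \<ge> 0") auto

lemma angle_diff_mult_cos_le:
  assumes "\<bar>\<theta>\<bar> < pi/2" "\<bar>\<phi>\<bar> < pi/2"
  shows "\<bar>\<theta> - \<phi>\<bar> * cos \<theta> \<le> pi * \<bar>sin \<theta> - sin \<phi>\<bar>"
proof -
  define c where "c = cos ((\<theta> + \<phi>) / 2)"
  define s where "s = \<bar>sin ((\<theta> - \<phi>) / 2)\<bar>"
  have c_pos: "c > 0"
    unfolding c_def using assms by (intro cos_gt_zero_pi) auto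
  have "cos \<phi> > 0"
    using assms by (intro cos_gt_zero_pi) auto
  have sin_diff: "\<bar>sin \<theta> - sin \<phi>\<bar> = 2 * s * c"
    unfolding sin_diff_sin c_def s_def using c_pos c_def by (simp add: abs_mult)
  have "cos \<theta> + cos \<phi> = 2 * c * cos ((\<theta> - \<phi>) / 2)"
    unfolding cos_plus_cos c_def ..
  also have "\<dots> \<le> 2 * c"
    using c_pos by (simp add: mult_left_le)
  finally have cos_le: "cos \<theta> \<le> 2 * c"
    using \<open>cos \<phi> > 0\<close> by linarith
  have "2 * \<bar>(\<theta> - \<phi>) / 2\<bar> / pi \<le> s"
    unfolding s_def using assms by (intro jordan_inequality_abs) auto
  then have angle_le: "\<bar>\<theta> - \<phi>\<bar> \<le> pi * s"
    by (simp add: field_simps)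
  have "\<bar>\<theta> - \<phi>\<bar> * cos \<theta> \<le> (pi * s) * (2 * c)"
    using angle_le cos_le assms by (intro mult_mono) (auto intro: cos_ge_zero)
  then show ?thesis
    unfolding sin_diff by simp
qed

lemma rho_nonneg: "\<bar>x\<bar> \<le> 2 \<Longrightarrow> 0 \<le> rho x"
  unfolding rho_def by (simp add: abs_square_le_1)

lemma arcsin_half_diff_le_rho:
  assumes "\<bar>x\<bar> < 2" "\<bar>m\<bar> < 2"
  shows "\<bar>arcsin (x/2) - arcsin (m/2)\<bar> \<le> pi/2 * (rho x * \<bar>x - m\<bar>)"
proof -
  define \<theta> where "\<theta> = arcsin (x/2)"
  define \<phi> where "\<phi> = arcsin (m/2)"
  have bounds: "\<bar>\<theta>\<bar> < pi/2" "\<bar>\<phi>\<bar> < pi/2"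
    using arcsin_lt_bounded[of "x/2"] arcsin_lt_bounded[of "m/2"] assms
    unfolding \<theta>_def \<phi>_def by (auto simp: abs_less_iff)
  have "cos \<theta> > 0"
    using bounds by (intro cos_gt_zero_pi) auto
  have rho_x: "rho x = 1 / cos \<theta>"
    using assms unfolding rho_def \<theta>_def by (simp add: cos_arcsin)
  have "\<bar>\<theta> - \<phi>\<bar> * cos \<theta> \<le> pi * \<bar>x/2 - m/2\<bar>"
    using angle_diff_mult_cos_le[OF bounds] assms unfolding \<theta>_def \<phi>_def by simp
  then show ?thesis
    using \<open>cos \<theta> > 0\<close> unfolding rho_x \<theta>_def \<phi>_def by (simp add: field_simps)
qed

lemma has_integral_rho:
  assumes "-2 \<le> a" "a \<le> b" "b \<le> 2"
  shows "(rho has_integral 2 * arcsin (b/2) - 2 * arcsin (a/2)) {a..b}"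
proof -
  have cont: "continuous_on {a..b} (\<lambda>x. 2 * arcsin (x / 2))"
    using assms by (auto intro!: continuous_intros continuous_on_arcsin)
  have deriv: "((\<lambda>x. 2 * arcsin (x / 2)) has_vector_derivative rho x) (at x)"
    if "x \<in> {a<..<b} - {}" for x
  proof -
    have "((\<lambda>x. 2 * arcsin (x / 2)) has_real_derivative
            2 * (inverse (sqrt (1 - (x/2)\<^sup>2)) * (1/2))) (at x)"
      using that assms
      by (intro DERIV_cmult DERIV_chain2[OF DERIV_arcsin]) (auto intro!: derivative_eq_intros)
    then show ?thesis
      unfolding rho_def has_real_derivative_iff_has_vector_derivative[symmetric]
      by (simp add: divide_simps)
  qed
  show ?thesis
    using fundamental_theorem_of_calculus_interior_strong[OF finite.emptyI \<open>a \<le> b\<close> deriv cont]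
    by simp
qed

text \<open>The interval \<open>[a, b]\<close> is the image under \<open>x = 2 sin \<theta>\<close> of the \<open>\<theta>\<close>-window of radius \<open>d\<close>.\<close>

lemma arcsin_half_window:
  assumes "\<bar>\<mu>\<bar> < 2" "0 \<le> d"
  obtains a b where "-2 \<le> a" "a \<le> b" "b \<le> 2"
    and "2 * arcsin (b/2) - 2 * arcsin (a/2) \<le> 4 * d"
    and "\<And>x. \<bar>x\<bar> < 2 \<Longrightarrow> \<bar>arcsin (x/2) - arcsin (\<mu>/2)\<bar> \<le> d \<Longrightarrow> x \<in> {a..b}"
proof -
  define \<phi> where "\<phi> = arcsin (\<mu>/2)"
  have "\<bar>\<phi>\<bar> < pi/2"
    using arcsin_lt_bounded[of "\<mu>/2"] assms unfolding \<phi>_def by (auto simp: abs_less_iff)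
  define a' where "a' = max (\<phi> - d) (-(pi/2))"
  define b' where "b' = min (\<phi> + d) (pi/2)"
  have window: "-(pi/2) \<le> a'" "a' \<le> b'" "b' \<le> pi/2" "b' - a' \<le> 2 * d"
    unfolding a'_def b'_def using \<open>\<bar>\<phi>\<bar> < pi/2\<close> assms by (auto simp: max_def min_def)
  show ?thesis
  proof
    show "-2 \<le> 2 * sin a'" "2 * sin b' \<le> 2"
      by (simp_all add: sin_ge_minus_one sin_le_one)
    show "2 * sin a' \<le> 2 * sin b'"
      using window sin_monotone_2pi_le[of a' b'] by simp
    show "2 * arcsin (2 * sin b' / 2) - 2 * arcsin (2 * sin a' / 2) \<le> 4 * d"
      using window by (simp add: arcsin_sin)
  next
    fix x :: real
    assume "\<bar>x\<bar> < 2" and close: "\<bar>arcsin (x/2) - arcsin (\<mu>/2)\<bar> \<le> d"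
    have "\<bar>arcsin (x/2)\<bar> < pi/2"
      using arcsin_lt_bounded[of "x/2"] \<open>\<bar>x\<bar> < 2\<close> by (auto simp: abs_less_iff)
    then have "a' \<le> arcsin (x/2)" "arcsin (x/2) \<le> b'"
      using close unfolding a'_def b'_def \<phi>_def by auto
    then have "sin a' \<le> sin (arcsin (x/2))" "sin (arcsin (x/2)) \<le> sin b'"
      using window \<open>\<bar>arcsin (x/2)\<bar> < pi/2\<close> by (auto intro!: sin_monotone_2pi_le)
    then show "x \<in> {2 * sin a'..2 * sin b'}"
      using \<open>\<bar>x\<bar> < 2\<close> by auto
  qed
qed

text \<open>No integrability of \<open>f\<close> is required: a non-integrable \<open>f\<close> has integral \<open>0 \<le> I\<close>.\<close>

lemma integral_le_dominating:
  fixes f g :: "'a::euclidean_space \<Rightarrow> real"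
  assumes "(g has_integral I) S" "\<And>x. x \<in> S \<Longrightarrow> f x \<le> g x" "0 \<le> I"
  shows "integral S f \<le> I"
proof (cases "f integrable_on S")
  case True
  then show ?thesis
    using has_integral_le[OF integrable_integral assms(1)] assms(2) by blast
next
  case False
  then show ?thesis
    using assms(3) by (simp add: not_integrable_integral)
qed

lemma Cc_bounded_support:
  assumes "Cc F"
  obtains R M where "0 < R" "0 \<le> M" "\<And>x. \<bar>F x\<bar> \<le> M" "\<And>x. R < \<bar>x\<bar> \<Longrightarrow> F x = 0"
proof -
  define K where "K = closure (support_on UNIV F)"
  have "compact K" "continuous_on UNIV F"
    using assms unfolding Cc_def K_def by auto
  have in_K: "x \<in> K" if "F x \<noteq> 0" for x
    using that closure_subset[of "{x. F x \<noteq> 0}"] unfolding K_def support_on_def by auto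
  obtain B where B: "\<And>x. x \<in> K \<Longrightarrow> \<bar>x\<bar> \<le> B"
    using compact_imp_bounded[OF \<open>compact K\<close>] unfolding bounded_iff by auto
  have "compact (F ` K)"
    using compact_continuous_image[OF continuous_on_subset[OF \<open>continuous_on UNIV F\<close>] \<open>compact K\<close>]
    by simp
  obtain M where "\<forall>y\<in>F ` K. norm y \<le> M"
    using compact_imp_bounded[OF \<open>compact (F ` K)\<close>] unfolding bounded_iff by blast
  then have M: "\<bar>F x\<bar> \<le> M" if "x \<in> K" for x
    using that by auto
  show ?thesis
  proof
    show "\<bar>F x\<bar> \<le> max M 0" for x
      using M[of x] in_K[of x] by force
    show "F x = 0" if "max B 1 < \<bar>x\<bar>" for x
      using that in_K[of x] B[of x] by force
  qed auto
qed

lemma integral_F_scaled_rho_le: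
  fixes F :: "real \<Rightarrow> real" and n :: nat
  assumes "\<And>x. F x \<le> M" "0 \<le> M" "\<And>x. R < \<bar>x\<bar> \<Longrightarrow> F x = 0" "0 \<le> R"
    and "0 < n" "\<bar>\<mu>\<bar> < 2"
  shows "integral {-2<..<2} (\<lambda>x. F (real n * rho x * (x - \<mu>)) * rho x) \<le> 2 * pi * R * M / real n"
proof -
  define d where "d = pi/2 * (R / real n)"
  have "0 \<le> d"
    unfolding d_def using assms by auto
  obtain a b where ab: "-2 \<le> a" "a \<le> b" "b \<le> 2"
    and window: "2 * arcsin (b/2) - 2 * arcsin (a/2) \<le> 4 * d"
    and in_window: "\<And>x. \<bar>x\<bar> < 2 \<Longrightarrow> \<bar>arcsin (x/2) - arcsin (\<mu>/2)\<bar> \<le> d \<Longrightarrow> x \<in> {a..b}"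
    using arcsin_half_window[OF \<open>\<bar>\<mu>\<bar> < 2\<close> \<open>0 \<le> d\<close>] by blast
  define g where "g x = (if x \<in> {a..b} then M * rho x else 0)" for x
  define I where "I = M * (2 * arcsin (b/2) - 2 * arcsin (a/2))"
  have "(g has_integral I) {-2..2}"
    unfolding g_def I_def using ab has_integral_mult_right[OF has_integral_rho[OF ab]]
    by (subst has_integral_restrict) auto
  then have g_int: "(g has_integral I) {-2<..<2}"
    using has_integral_open_interval[of g I "-2::real" 2] by simp
  have dominated: "F (real n * rho x * (x - \<mu>)) * rho x \<le> g x" if "x \<in> {-2<..<2}" for x
  proof (cases "F (real n * rho x * (x - \<mu>)) = 0")
    case True
    then show ?thesis
      unfolding g_def using rho_nonneg[of x] that \<open>0 \<le> M\<close> by auto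
  next
    case False
    have "0 \<le> rho x"
      using rho_nonneg[of x] that by auto
    have "real n * (rho x * \<bar>x - \<mu>\<bar>) \<le> R"
      using assms(3) False \<open>0 \<le> rho x\<close> by (force simp: abs_mult)
    then have "pi/2 * (rho x * \<bar>x - \<mu>\<bar>) \<le> d"
      unfolding d_def using \<open>0 < n\<close> by (intro mult_left_mono) (auto simp: field_simps)
    then have "x \<in> {a..b}"
      using in_window arcsin_half_diff_le_rho[of x \<mu>] that \<open>\<bar>\<mu>\<bar> < 2\<close> by force
    then show ?thesis
      unfolding g_def using assms(1) \<open>0 \<le> rho x\<close> by (simp add: mult_right_mono)
  qed
  have "0 \<le> I"
    unfolding I_def using ab \<open>0 \<le> M\<close> by (simp add: arcsin_le_mono)
  then have "integral {-2<..<2} (\<lambda>x. F (real n * rho x * (x - \<mu>)) * rho x) \<le> I"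
    using integral_le_dominating[OF g_int dominated] by blast
  also have "I \<le> M * (4 * d)"
    unfolding I_def using window \<open>0 \<le> M\<close> by (intro mult_left_mono)
  also have "\<dots> = 2 * pi * R * M / real n"
    unfolding d_def by (simp add: field_simps)
  finally show ?thesis .
qed

theorem lemma15:
  fixes F :: "real \<Rightarrow> real"
  assumes "Cc F"
    and "\<And>x. F x \<ge> 0"
    and "\<And>x y. \<bar>x\<bar> > \<bar>y\<bar> \<Longrightarrow> F x \<le> F y"
  shows "\<exists>C::real. \<exists>n0::nat. \<forall>n\<ge>n0.
           (\<forall>\<mu>\<in>{-2<..<2}.
             integral {-2<..<2} (\<lambda>x. F (real n * rho x * (x - \<mu>)) * rho x) \<le> C / real n)"
proof -
  obtain R M where "0 < R" "0 \<le> M" "\<And>x. \<bar>F x\<bar> \<le> M" "\<And>x. R < \<bar>x\<bar> \<Longrightarrow> F x = 0"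
    using Cc_bounded_support[OF \<open>Cc F\<close>] by blast
  then have "\<forall>n\<ge>1. \<forall>\<mu>\<in>{-2<..<2}.
      integral {-2<..<2} (\<lambda>x. F (real n * rho x * (x - \<mu>)) * rho x) \<le> 2 * pi * R * M / real n"
    by (intro allI impI ballI integral_F_scaled_rho_le) (auto simp: abs_le_iff)
  then show ?thesis
    by blast
qed

end
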